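(* Let $\pi$ be a full-support distribution on $K$ arms, $r\in\mathbb{R}^K$, $\eta>0$. For any arm $k$ with $U(k)<0$, the DG gate satisfies $w(k)\le\pi(k)^{|U(k)|/\eta}$. In particular, if $j$ is an arm with $r(j)>r(k)$ and $|U(k)|\ge\Delta_{jk}/2$, then \[ w(k)\,\pi(k)\;\le\;\pi(k)^{1+\Delta_{jk}/(2\eta)}. \]
   Context: $U(a):=r(a)-\pi^\top r$ (advantage), $\ell(a):=-\log\pi(a)$ (surprisal), $\Delta_{ab}:=r(a)-r(b)$, and the DG gate is $w(a):=\sigma(U(a)\ell(a)/\eta)$ with $\sigma(x)=1/(1+e^{-x})$. *)

theory Defs
  imports "HOL-Analysis.Analysis"
begin

definition sigmoid :: "real \<Rightarrow> real" where
  "sigmoid x = 1 / (1 + exp (- x))"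

definition adv :: "('a::finite \<Rightarrow> real) \<Rightarrow> ('a \<Rightarrow> real) \<Rightarrow> 'a \<Rightarrow> real" where
  "adv \<pi> r a = r a - (\<Sum>b\<in>UNIV. \<pi> b * r b)"

definition surprisal :: "('a \<Rightarrow> real) \<Rightarrow> 'a \<Rightarrow> real" where
  "surprisal \<pi> a = - ln (\<pi> a)"

definition gap :: "('a \<Rightarrow> real) \<Rightarrow> 'a \<Rightarrow> 'a \<Rightarrow> real" where
  "gap r a b = r a - r b"

definition dg_gate :: "real \<Rightarrow> ('a::finite \<Rightarrow> real) \<Rightarrow> ('a \<Rightarrow> real) \<Rightarrow> 'a \<Rightarrow> real" where
  "dg_gate \<eta> \<pi> r a = sigmoid (adv \<pi> r a * surprisal \<pi> a / \<eta>)"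

end

theory Submission
  imports Defs
begin

text \<open>Since \<open>\<sigma>(x) \<le> e\<^sup>x\<close>, the gate is at most \<open>exp (U(k) \<ell>(k) / \<eta>)\<close>, and for
  \<open>U(k) \<le> 0\<close> this exponential is exactly \<open>\<pi>(k) powr (\<bar>U(k)\<bar> / \<eta>)\<close>. As \<open>\<pi>(k) \<le> 1\<close>,
  powers of \<open>\<pi>(k)\<close> decrease in the exponent, so any lower bound on \<open>\<bar>U(k)\<bar>\<close> gives
  the second estimate.\<close>

lemma sigmoid_le_exp: "sigmoid x \<le> exp x"
proof -
  have "1 \<le> (1 + exp (- x)) * exp x"
    by (simp add: distrib_right exp_minus)
  then show ?thesis
    unfolding sigmoid_def by (simp add: divide_le_eq add_pos_pos mult.commute)
qed

lemma le_one_if_nonneg_sum_eq_one: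
  fixes p :: "'a::finite \<Rightarrow> real"
  assumes "\<And>a. p a \<ge> 0" and "(\<Sum>a\<in>UNIV. p a) = 1"
  shows "p k \<le> 1"
  using member_le_sum[of k UNIV p] assms by simp

lemma dg_gate_le_powr:
  assumes "\<pi> k > 0" and "adv \<pi> r k \<le> 0"
  shows "dg_gate \<eta> \<pi> r k \<le> \<pi> k powr (\<bar>adv \<pi> r k\<bar> / \<eta>)"
proof -
  have "dg_gate \<eta> \<pi> r k \<le> exp (adv \<pi> r k * surprisal \<pi> k / \<eta>)"
    unfolding dg_gate_def by (rule sigmoid_le_exp)
  also have "adv \<pi> r k * surprisal \<pi> k / \<eta> = \<bar>adv \<pi> r k\<bar> / \<eta> * ln (\<pi> k)"
    using assms(2) unfolding surprisal_def by simp
  also have "exp \<dots> = \<pi> k powr (\<bar>adv \<pi> r k\<bar> / \<eta>)"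
    using assms(1) by (simp add: powr_def)
  finally show ?thesis .
qed

lemma dg_gate_mult_le_powr:
  assumes "\<pi> k > 0" and "\<pi> k \<le> 1" and "adv \<pi> r k \<le> 0"
    and "e \<le> \<bar>adv \<pi> r k\<bar> / \<eta>"
  shows "dg_gate \<eta> \<pi> r k * \<pi> k \<le> \<pi> k powr (1 + e)"
proof -
  have "dg_gate \<eta> \<pi> r k * \<pi> k \<le> \<pi> k powr (\<bar>adv \<pi> r k\<bar> / \<eta>) * \<pi> k"
    using dg_gate_le_powr[OF assms(1,3)] assms(1) by (simp add: mult_right_mono)
  also have "\<dots> = \<pi> k powr (1 + \<bar>adv \<pi> r k\<bar> / \<eta>)"
    using assms(1) by (simp add: powr_add)
  also have "\<dots> \<le> \<pi> k powr (1 + e)"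
    using assms by (intro powr_mono') auto
  finally show ?thesis .
qed

theorem lemma2:
  fixes \<pi> r :: "'a::finite \<Rightarrow> real" and \<eta> :: real
  assumes pos: "\<And>a. \<pi> a > 0"
    and sum1: "(\<Sum>a\<in>UNIV. \<pi> a) = 1"
    and eta: "\<eta> > 0"
  shows "(\<forall>k. adv \<pi> r k < 0 \<longrightarrow> dg_gate \<eta> \<pi> r k \<le> \<pi> k powr (\<bar>adv \<pi> r k\<bar> / \<eta>))
    \<and> (\<forall>j k. adv \<pi> r k < 0 \<longrightarrow> r j > r k \<longrightarrow> \<bar>adv \<pi> r k\<bar> \<ge> gap r j k / 2 \<longrightarrow>
          dg_gate \<eta> \<pi> r k * \<pi> k \<le> \<pi> k powr (1 + gap r j k / (2 * \<eta>)))"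
proof (intro conjI allI impI)
  fix k assume "adv \<pi> r k < 0"
  then show "dg_gate \<eta> \<pi> r k \<le> \<pi> k powr (\<bar>adv \<pi> r k\<bar> / \<eta>)"
    using pos by (intro dg_gate_le_powr) auto
next
  fix j k assume neg: "adv \<pi> r k < 0" and "r j > r k"
    and half_gap: "\<bar>adv \<pi> r k\<bar> \<ge> gap r j k / 2"
  have "\<pi> k \<le> 1"
    using pos sum1 by (intro le_one_if_nonneg_sum_eq_one) (auto intro: less_imp_le)
  moreover have "gap r j k / (2 * \<eta>) \<le> \<bar>adv \<pi> r k\<bar> / \<eta>"
    using divide_right_mono[OF half_gap, of \<eta>] eta by (simp add: mult.commute)
  ultimately show "dg_gate \<eta> \<pi> r k * \<pi> k \<le> \<pi> k powr (1 + gap r j k / (2 * \<eta>))"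
    using pos neg by (intro dg_gate_mult_le_powr) auto
qed

end
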